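(* Let $F:\ell^2(\mathbb{Z})\to\ell^2(\mathbb{Z})$ be the bilateral weighted forward shift $Fe_n=w_ne_{n+1}$ ($n\in\mathbb{Z}$), where $w_n=3$ for $n\ge0$ and $w_n=4$ for $n<0$. Let $\mathcal{M}=\{(a_n)_{n\in\mathbb{Z}}\in\ell^2(\mathbb{Z}):a_{2n}=0\text{ for all }n\in\mathbb{Z}\}$. Then $F$ is $\mathcal{M}$-diskcyclic but not $\mathcal{M}$-hypercyclic.
   Context: $(e_n)_{n\in\mathbb{Z}}$ is the canonical orthonormal basis of $\ell^2(\mathbb{Z})$. $\mathbb{D}=\{\alpha\in\mathbb{C}:|\alpha|\le1\}$. An operator $T$ is $\mathcal{M}$-diskcyclic if there is $x$ with $\{\alpha T^nx:\alpha\in\mathbb{D},n\ge0\}\cap\mathcal{M}$ dense in $\mathcal{M}$, and $\mathcal{M}$-hypercyclic if there is $x$ with $\{T^nx:n\ge0\}\cap\mathcal{M}$ dense in $\mathcal{M}$. *)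

theory Defs
  imports "HOL-Analysis.Analysis"
begin

definition ell2 :: "(int \<Rightarrow> complex) set" where
  "ell2 = {a. (\<lambda>n. (cmod (a n))^2) summable_on UNIV}"

definition ell2_norm :: "(int \<Rightarrow> complex) \<Rightarrow> real" where
  "ell2_norm a = sqrt (infsum (\<lambda>n. (cmod (a n))^2) UNIV)"

definition ell2_dense_in :: "(int \<Rightarrow> complex) set \<Rightarrow> (int \<Rightarrow> complex) set \<Rightarrow> bool" where
  "ell2_dense_in S M \<longleftrightarrow> S \<subseteq> M \<and>
     (\<forall>y\<in>M. \<forall>e>0. \<exists>z\<in>S. ell2_norm (\<lambda>n. z n - y n) < e)"

definition M_diskcyclic ::
  "((int \<Rightarrow> complex) \<Rightarrow> (int \<Rightarrow> complex)) \<Rightarrow> (int \<Rightarrow> complex) set \<Rightarrow> bool" where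
  "M_diskcyclic T M \<longleftrightarrow> (\<exists>x\<in>ell2.
     ell2_dense_in ({(\<lambda>k. \<alpha> * (T ^^ n) x k) | \<alpha> n. cmod \<alpha> \<le> 1} \<inter> M) M)"

definition M_hypercyclic ::
  "((int \<Rightarrow> complex) \<Rightarrow> (int \<Rightarrow> complex)) \<Rightarrow> (int \<Rightarrow> complex) set \<Rightarrow> bool" where
  "M_hypercyclic T M \<longleftrightarrow> (\<exists>x\<in>ell2.
     ell2_dense_in ({(T ^^ n) x | n. True} \<inter> M) M)"

definition wt :: "int \<Rightarrow> complex" where
  "wt n = (if n \<ge> 0 then 3 else 4)"

text \<open>Bilateral weighted forward shift: F e_n = w_n e_(n+1), i.e. (F a)(m) = w_(m-1) a(m-1).\<close>
definition Fshift :: "(int \<Rightarrow> complex) \<Rightarrow> (int \<Rightarrow> complex)" where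
  "Fshift a = (\<lambda>m. wt (m - 1) * a (m - 1))"

definition Msub :: "(int \<Rightarrow> complex) set" where
  "Msub = {a \<in> ell2. \<forall>n. a (2 * n) = 0}"

end

theory Submission
  imports Defs "HOL-Library.Countable"
begin

(* The weighted shift F multiplies a coordinate by 3 when it moves from a nonnegative
   index and by 4 otherwise.  Hence on finitely supported vectors F^n grows like 3^n,
   while the right inverse of F^n shrinks like 4^(-n).  With the scaling factor
   lam = 7/2, strictly between 3 and 4, both lam^(-n) F^n and lam^n F^(-n) tend to zero on
   such vectors, at the geometric rate rho = 7/8.

   M-diskcyclicity: enumerate a countable dense subset y_0, y_1, ... of M (rational,
   finitely supported vectors vanishing at even indices, each occurring with arbitrarily
   large index), choose rapidly increasing even exponents n_i and put
   x = sum_i lam^(n_i) F^(-n_i) y_i.  Then lam^(-n_j) F^(n_j) x = y_j + (error of size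
   about 2^(-j)), and these vectors lie in M because all n_i are even.
   Non-M-hypercyclicity: all weights are at least 1, so the norm of F^n x is at least the
   norm of x; the orbit can approach 0 only if x = 0, and then it is {0}. *)


lemma l1_imp_l2:
  fixes z :: "'i \<Rightarrow> 'a::real_normed_vector"
  assumes summ: "(\<lambda>m. norm (z m)) summable_on UNIV"
  shows "(\<lambda>m. (norm (z m))^2) summable_on UNIV \<and>
         infsum (\<lambda>m. (norm (z m))^2) UNIV \<le> (infsum (\<lambda>m. norm (z m)) UNIV)^2"
proof -
  let ?S = "infsum (\<lambda>m. norm (z m)) UNIV"
  have coord: "norm (z m) \<le> ?S" for m
    using finite_sum_le_infsum[OF summ, of "{m}"] by simp
  have dom: "(norm (z m))^2 \<le> ?S * norm (z m)" for m
    using coord[of m] by (simp add: power2_eq_square mult_right_mono)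
  have scaled: "(\<lambda>m. ?S * norm (z m)) summable_on UNIV"
    using summ by (rule summable_on_cmult_right)
  have sq: "(\<lambda>m. (norm (z m))^2) summable_on UNIV"
    by (rule summable_on_comparison_test[OF scaled]) (use dom in auto)
  have "infsum (\<lambda>m. (norm (z m))^2) UNIV \<le> infsum (\<lambda>m. ?S * norm (z m)) UNIV"
    by (rule infsum_mono[OF sq scaled dom])
  also have "\<dots> = ?S * ?S" by (simp add: infsum_cmult_right')
  finally show ?thesis using sq by (simp add: power2_eq_square)
qed

lemma l1_sum_of_series:
  fixes a :: "'i \<Rightarrow> 'm \<Rightarrow> 'v::banach" and B :: "'i \<Rightarrow> real"
  assumes l1: "\<And>i. (\<lambda>m. norm (a i m)) summable_on UNIV"
    and bound: "\<And>i. infsum (\<lambda>m. norm (a i m)) UNIV \<le> B i"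
    and B: "B summable_on UNIV"
  shows "(\<forall>m. (\<lambda>i. a i m) summable_on UNIV) \<and>
         (\<lambda>m. norm (infsum (\<lambda>i. a i m) UNIV)) summable_on UNIV \<and>
         infsum (\<lambda>m. norm (infsum (\<lambda>i. a i m) UNIV)) UNIV \<le> infsum B UNIV"
proof -
  have norms: "(\<lambda>i. infsum (\<lambda>m. norm (a i m)) UNIV) summable_on UNIV"
    by (rule summable_on_comparison_test[OF B]) (use bound in \<open>auto intro: infsum_nonneg\<close>)
  have "(\<lambda>(i, m). norm (a i m)) summable_on UNIV \<times> UNIV"
    using Infinite_Sum.abs_summable_on_Sigma_iff[where f="\<lambda>(i, m). a i m" and A=UNIV and B="\<lambda>_. UNIV"] l1 norms
    by (simp add: infsum_nonneg case_prod_unfold)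
  then have joint: "(\<lambda>(m, i). norm (a i m)) summable_on UNIV \<times> UNIV"
    by (subst summable_on_swap) (simp add: case_prod_unfold)
  then have pointwise: "\<forall>m. (\<lambda>i. norm (a i m)) summable_on UNIV"
    and outer: "(\<lambda>m. infsum (\<lambda>i. norm (a i m)) UNIV) summable_on UNIV"
    using Infinite_Sum.abs_summable_on_Sigma_iff[where f="\<lambda>(m, i). a i m" and A=UNIV and B="\<lambda>_. UNIV"]
    by (auto simp: infsum_nonneg case_prod_unfold)
  have conv: "\<forall>m. (\<lambda>i. a i m) summable_on UNIV"
    using pointwise by (blast intro: abs_summable_summable)
  have tri: "norm (infsum (\<lambda>i. a i m) UNIV) \<le> infsum (\<lambda>i. norm (a i m)) UNIV" for m
    by (rule norm_infsum_bound) (use pointwise in blast)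
  have summ: "(\<lambda>m. norm (infsum (\<lambda>i. a i m) UNIV)) summable_on UNIV"
    by (rule summable_on_comparison_test[OF outer]) (use tri in auto)
  have "infsum (\<lambda>m. norm (infsum (\<lambda>i. a i m) UNIV)) UNIV
        \<le> infsum (\<lambda>m. infsum (\<lambda>i. norm (a i m)) UNIV) UNIV"
    by (rule infsum_mono[OF summ outer tri])
  also have "\<dots> = infsum (\<lambda>i. infsum (\<lambda>m. norm (a i m)) UNIV) UNIV"
    by (rule infsum_swap_banach[OF joint])
  also have "\<dots> \<le> infsum B UNIV"
    by (rule infsum_mono[OF norms B bound])
  finally show ?thesis using conv summ by blast
qed

lemma finite_support_l1:
  fixes f :: "'i \<Rightarrow> 'a::real_normed_vector" and C :: real
  assumes "finite T" "\<And>m. m \<notin> T \<Longrightarrow> f m = 0" "\<And>m. norm (f m) \<le> C"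
  shows "(\<lambda>m. norm (f m)) summable_on UNIV \<and> infsum (\<lambda>m. norm (f m)) UNIV \<le> card T * C"
proof -
  have "infsum (\<lambda>m. norm (f m)) UNIV = sum (\<lambda>m. norm (f m)) T"
    using assms by (subst infsum_cong_neutral[where T=T and g="\<lambda>m. norm (f m)"]) auto
  also have "\<dots> \<le> sum (\<lambda>m. C) T" by (rule sum_mono) (use assms in auto)
  finally have "infsum (\<lambda>m. norm (f m)) UNIV \<le> card T * C" by simp
  moreover have "(\<lambda>m. norm (f m)) summable_on UNIV"
    by (rule finite_nonzero_values_imp_summable_on, rule finite_subset[OF _ assms(1)])
       (use assms in auto)
  ultimately show ?thesis by blast
qed

lemma geometric_has_sum:
  fixes q :: real
  assumes "0 \<le> q" "q < 1"
  shows "((\<lambda>i. q ^ i) has_sum (1 / (1 - q))) UNIV"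
  using assms by (intro sums_nonneg_imp_has_sum geometric_sums) auto

lemma half_power_has_sum: "((\<lambda>i. (1/2::real) ^ (i + j)) has_sum ((1/2) ^ j * 2)) UNIV"
proof -
  have "((\<lambda>i. (1/2::real) ^ j * (1/2) ^ i) has_sum ((1/2) ^ j * (1 / (1 - 1/2)))) UNIV"
    by (rule has_sum_cmult_right, rule geometric_has_sum) auto
  then show ?thesis by (simp add: power_add mult.commute)
qed

lemma dist_sq_le:
  fixes a b c :: "'a::real_normed_vector"
  shows "(norm (a - b))^2 \<le> 2 * (norm (a - c))^2 + 2 * (norm (b - c))^2"
proof -
  have "norm (a - b) \<le> norm (a - c) + norm (b - c)"
    using norm_triangle_ineq[of "a - c" "c - b"] by (simp add: norm_minus_commute)
  then have "(norm (a - b))^2 \<le> (norm (a - c) + norm (b - c))^2"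
    by (rule power_mono) simp
  also have "\<dots> \<le> 2 * (norm (a - c))^2 + 2 * (norm (b - c))^2"
    by (smt (verit) power2_sum sum_squares_ge_zero power2_diff zero_le_power2)
  finally show ?thesis .
qed

lemma ell2_norm_diff_lt:
  fixes a b c :: "int \<Rightarrow> complex"
  assumes a: "(\<lambda>m. (cmod (a m - c m))^2) summable_on UNIV"
      "infsum (\<lambda>m. (cmod (a m - c m))^2) UNIV \<le> Ea"
    and b: "(\<lambda>m. (cmod (b m - c m))^2) summable_on UNIV"
      "infsum (\<lambda>m. (cmod (b m - c m))^2) UNIV \<le> Eb"
    and small: "2 * Ea + 2 * Eb < e^2" and e: "0 < e"
  shows "ell2_norm (\<lambda>m. a m - b m) < e"
proof -
  define R where "R m = 2 * (cmod (a m - c m))^2 + 2 * (cmod (b m - c m))^2" for m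
  have R: "R summable_on UNIV"
    unfolding R_def by (intro summable_on_add summable_on_cmult_right a b)
  have "infsum R UNIV = 2 * infsum (\<lambda>m. (cmod (a m - c m))^2) UNIV
                        + 2 * infsum (\<lambda>m. (cmod (b m - c m))^2) UNIV"
    unfolding R_def
    by (subst infsum_add) (auto intro: summable_on_cmult_right a b simp: infsum_cmult_right')
  then have R_small: "infsum R UNIV < e^2" using a(2) b(2) small by linarith
  have pt: "(cmod (a m - b m))^2 \<le> R m" for m unfolding R_def by (rule dist_sq_le)
  have D: "(\<lambda>m. (cmod (a m - b m))^2) summable_on UNIV"
    by (rule summable_on_comparison_test[OF R pt]) simp
  have "infsum (\<lambda>m. (cmod (a m - b m))^2) UNIV < e^2"
    using infsum_mono[OF D R pt] R_small by linarith
  then show ?thesis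
    unfolding ell2_norm_def using e by (metis abs_of_pos real_sqrt_abs real_sqrt_less_iff)
qed


definition weight :: "int \<Rightarrow> real" where "weight t = (if t \<ge> 0 then 3 else 4)"

lemma wt_weight: "wt t = complex_of_real (weight t)"
  by (simp add: wt_def weight_def)

lemma weight_bounds: "3 \<le> weight t" "weight t \<le> 4"
  by (auto simp: weight_def)

(* wprod p d = w_p * w_(p+1) * ... * w_(p+d-1): the factor by which F^d moves the
   coordinate at p to p + d. *)
primrec wprod :: "int \<Rightarrow> nat \<Rightarrow> real" where
  "wprod p 0 = 1"
| "wprod p (Suc d) = wprod p d * weight (p + int d)"

lemma wprod_ge: "3 ^ d \<le> wprod p d"
proof (induction d)
  case (Suc d)
  have "3 ^ d * 3 \<le> wprod p d * weight (p + int d)"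
    by (rule mult_mono[OF Suc.IH weight_bounds(1)]) (auto intro: order_trans[OF _ Suc.IH])
  then show ?case by (simp add: mult.commute)
qed simp

lemma wprod_pos: "0 < wprod p d"
  using wprod_ge[of d p] by (smt (verit) zero_less_power)

lemma wprod_ge_1: "1 \<le> wprod p d"
  using wprod_ge[of d p] by (smt (verit) one_le_power)

lemma wprod_le: "wprod p d \<le> 4 ^ d"
proof (induction d)
  case (Suc d)
  have "wprod p d * weight (p + int d) \<le> 4 ^ d * 4"
    by (rule mult_mono[OF Suc.IH weight_bounds(2)])
       (use wprod_pos[of p d] weight_bounds[of "p + int d"] in auto)
  then show ?case by (simp add: mult.commute)
qed simp

lemma wprod_add: "wprod p (a + b) = wprod p a * wprod (p + int a) b"
  by (induction b) (simp_all add: algebra_simps)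

lemma wprod_nonneg_start: "p \<ge> 0 \<Longrightarrow> wprod p d = 3 ^ d"
  by (induction d) (simp_all add: weight_def)

lemma wprod_nonpos_end: "p + int d \<le> 0 \<Longrightarrow> wprod p d = 4 ^ d"
  by (induction d) (simp_all add: weight_def)

(* Starting at least S to the left of 0, at most S factors are 4; the rest are 3. *)
lemma wprod_upper: assumes "p \<ge> - int S" shows "wprod p d \<le> 4 ^ S * 3 ^ d"
proof (cases "d \<le> S")
  case True
  have "wprod p d \<le> 4 ^ d" by (rule wprod_le)
  also have "\<dots> \<le> 4 ^ S" using True by (simp add: power_increasing)
  finally show ?thesis by (smt (verit) mult_le_cancel_left1 one_le_power)
next
  case False
  then obtain r where d: "d = S + r" by (metis le_add_diff_inverse nat_le_linear)
  have "wprod p d = wprod p S * wprod (p + int S) r" by (simp add: d wprod_add)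
  also have "wprod (p + int S) r = 3 ^ r" using assms by (intro wprod_nonneg_start) simp
  also have "wprod p S * 3 ^ r \<le> 4 ^ S * 3 ^ r" using wprod_le[of p S] by simp
  also have "\<dots> \<le> 4 ^ S * 3 ^ d" by (simp add: d power_increasing)
  finally show ?thesis .
qed

(* Ending at most S to the right of 0, at most S factors are 3; the rest are 4. *)
lemma wprod_lower: assumes "p + int d \<le> int S" shows "4 ^ d \<le> 4 ^ S * wprod p d"
proof (cases "d \<le> S")
  case True
  have "(4::real) ^ d \<le> 4 ^ S" using True by (simp add: power_increasing)
  also have "\<dots> \<le> 4 ^ S * wprod p d" using wprod_ge_1[of p d] by simp
  finally show ?thesis .
next
  case False
  then obtain r where d: "d = r + S" by (metis add.commute le_add_diff_inverse nat_le_linear)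
  have "wprod p d = wprod p r * wprod (p + int r) S" by (simp add: d wprod_add)
  also have "wprod p r = 4 ^ r" using assms d by (intro wprod_nonpos_end) simp
  finally have "wprod p d \<ge> 4 ^ r" using wprod_ge_1[of "p + int r" S] by simp
  then show ?thesis by (simp add: d power_add mult_left_mono)
qed

lemma Fshift_power:
  "(Fshift ^^ k) a m = complex_of_real (wprod (m - int k) k) * a (m - int k)"
proof (induction k arbitrary: m)
  case (Suc k)
  have "(Fshift ^^ Suc k) a m = wt (m - 1) * (Fshift ^^ k) a (m - 1)"
    by (simp add: Fshift_def)
  also have "\<dots> = complex_of_real (weight (m - 1) * wprod (m - 1 - int k) k) * a (m - 1 - int k)"
    by (simp add: Suc wt_weight)
  also have "weight (m - 1) * wprod (m - 1 - int k) k = wprod (m - int (Suc k)) (Suc k)"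
    by (simp add: algebra_simps)
  finally show ?case by (simp add: algebra_simps)
qed simp


(* The scaling factor lam lies strictly between the weights 3 and 4; rho bounds both
   ratios 3/lam and lam/4. *)
definition lam :: real where "lam = 7/2"
definition rho :: real where "rho = 7/8"

lemma lam_pos: "0 < lam" by (simp add: lam_def)

lemma rho_pos: "0 < rho" by (simp add: rho_def)

definition nat_absdiff :: "nat \<Rightarrow> nat \<Rightarrow> nat" where
  "nat_absdiff s n = (if s \<le> n then n - s else s - n)"

lemma power_absdiff_le:
  fixes r :: real
  assumes "0 \<le> r" "r \<le> 1"
  shows "r ^ nat_absdiff s n * r ^ s \<le> r ^ n"
proof (cases "s \<le> n")
  case True then show ?thesis by (simp add: nat_absdiff_def flip: power_add)
next
  case False
  have "r ^ (s - n) * r ^ s = r ^ ((s - n) + s)" by (simp add: power_add)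
  also have "\<dots> \<le> r ^ n" using False assms by (intro power_decreasing) auto
  finally show ?thesis using False by (simp add: nat_absdiff_def)
qed

(* A coordinate within distance S of 0 that is moved back n steps by the inverse of F^n
   and forward s steps by F^s, with scaling lam^(n - s), is multiplied by at most
   4^S rho^|s - n|. *)
lemma scaled_transfer_bound:
  fixes n s S :: nat and q :: int
  assumes q: "\<bar>q\<bar> \<le> int S"
  shows "lam ^ n / lam ^ s * wprod (q - int n) s / wprod (q - int n) n
          \<le> 4 ^ S * rho ^ nat_absdiff s n"
proof (cases "s \<le> n")
  case False
  define d where "d = s - n"
  have s: "s = n + d" using False by (simp add: d_def)
  have split: "wprod (q - int n) s = wprod (q - int n) n * wprod q d"
    using wprod_add[of "q - int n" n d] s by simp
  have "lam ^ n / lam ^ s * wprod (q - int n) s / wprod (q - int n) n = wprod q d / lam ^ d"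
  proof -
    have "lam ^ s = lam ^ n * lam ^ d" by (simp add: s power_add)
    then show ?thesis using lam_pos wprod_pos[of "q - int n" n] by (simp add: split field_simps)
  qed
  also have "\<dots> \<le> 4 ^ S * 3 ^ d / lam ^ d"
    by (rule divide_right_mono) (use wprod_upper[of S q d] q in \<open>auto simp: lam_def\<close>)
  also have "\<dots> = 4 ^ S * (3 / lam) ^ d" by (simp add: power_divide)
  also have "\<dots> \<le> 4 ^ S * rho ^ d"
    by (rule mult_left_mono, rule power_mono) (auto simp: lam_def rho_def)
  finally show ?thesis using False by (simp add: d_def nat_absdiff_def)
next
  case True
  define d where "d = n - s"
  have n: "n = s + d" using True by (simp add: d_def)
  have split: "wprod (q - int n) n = wprod (q - int n) s * wprod (q - int d) d"
    using wprod_add[of "q - int n" s d] n by (simp add: algebra_simps)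
  have pos: "0 < wprod (q - int n) s" "0 < wprod (q - int d) d" by (rule wprod_pos)+
  have low: "4 ^ d \<le> 4 ^ S * wprod (q - int d) d" by (rule wprod_lower) (use q in simp)
  have "lam ^ n / lam ^ s * wprod (q - int n) s / wprod (q - int n) n
        = lam ^ d / wprod (q - int d) d"
  proof -
    have "lam ^ n = lam ^ s * lam ^ d" by (simp add: n power_add)
    then show ?thesis using lam_pos pos by (simp add: split field_simps)
  qed
  also have "\<dots> \<le> lam ^ d / (4 ^ d / 4 ^ S)"
    by (rule divide_left_mono) (use low pos in \<open>auto simp: lam_def field_simps\<close>)
  also have "\<dots> = 4 ^ S * (lam / 4) ^ d" by (simp add: power_divide)
  also have "lam / 4 = rho" by (simp add: lam_def rho_def)
  finally show ?thesis using True by (simp add: d_def nat_absdiff_def)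
qed


(* Test vectors: a list of (index, rational real part, rational imaginary part) describes
   a finitely supported vector with Gaussian-rational entries; test_vec keeps its odd
   coordinates, so it lies in M.  There are countably many such lists. *)
definition rat_complex :: "rat \<times> rat \<Rightarrow> complex" where
  "rat_complex = (\<lambda>(a, b). Complex (of_rat a) (of_rat b))"

definition list_vec :: "(int \<times> rat \<times> rat) list \<Rightarrow> int \<Rightarrow> complex" where
  "list_vec L m = sum_list (map (\<lambda>(k, c). if k = m then rat_complex c else 0) L)"

definition test_vec :: "(int \<times> rat \<times> rat) list \<Rightarrow> int \<Rightarrow> complex" where
  "test_vec L m = (if odd m then list_vec L m else 0)"

(* A radius containing the support, and a bound on the entries. *)
definition test_radius :: "(int \<times> rat \<times> rat) list \<Rightarrow> nat" where
  "test_radius L = sum_list (map (\<lambda>(k, c). nat \<bar>k\<bar>) L)"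

definition test_mass :: "(int \<times> rat \<times> rat) list \<Rightarrow> real" where
  "test_mass L = sum_list (map (\<lambda>(k, c). cmod (rat_complex c)) L)"

lemma list_vec_norm_le: "cmod (list_vec L m) \<le> test_mass L"
proof (induction L)
  case (Cons x L)
  obtain k c where x: "x = (k, c)" by (cases x)
  have "cmod (list_vec (x # L) m) \<le> cmod (if k = m then rat_complex c else 0) + cmod (list_vec L m)"
    unfolding list_vec_def x by (simp add: norm_triangle_ineq)
  also have "\<dots> \<le> test_mass (x # L)"
    using Cons by (auto simp: test_mass_def x intro: add_increasing)
  finally show ?case .
qed (simp add: list_vec_def test_mass_def)

lemma test_mass_nonneg: "0 \<le> test_mass L"
  using list_vec_norm_le[of L 0] by (rule order_trans[OF norm_ge_zero])

lemma test_vec_norm_le: "cmod (test_vec L m) \<le> test_mass L"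
  by (simp add: test_vec_def list_vec_norm_le test_mass_nonneg)

lemma list_vec_outside: "int (test_radius L) < \<bar>m\<bar> \<Longrightarrow> list_vec L m = 0"
proof (induction L)
  case (Cons x L)
  obtain k c where x: "x = (k, c)" by (cases x)
  have "test_radius (x # L) = nat \<bar>k\<bar> + test_radius L" by (simp add: test_radius_def x)
  then show ?case using Cons by (auto simp: list_vec_def x)
qed (simp add: list_vec_def)

lemma test_vec_outside: "int (test_radius L) < \<bar>m\<bar> \<Longrightarrow> test_vec L m = 0"
  by (simp add: test_vec_def list_vec_outside)

lemma test_vec_even: "even m \<Longrightarrow> test_vec L m = 0"
  by (simp add: test_vec_def)

lemma list_vec_of_distinct:
  assumes "distinct xs"
  shows "list_vec (map (\<lambda>m. (m, g m)) xs) m = (if m \<in> set xs then rat_complex (g m) else 0)"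
proof -
  have "list_vec (map (\<lambda>m. (m, g m)) xs) m
        = sum_list (map (\<lambda>k. if k = m then rat_complex (g k) else 0) xs)"
    by (simp add: list_vec_def o_def)
  also have "\<dots> = (\<Sum>k\<in>set xs. if k = m then rat_complex (g k) else 0)"
    using assms by (simp add: sum_list_distinct_conv_sum_set)
  finally show ?thesis by (simp add: sum.delta')
qed

lemma rat_complex_approx:
  assumes "0 < \<eta>"
  shows "\<exists>c. (cmod (z - rat_complex c))^2 \<le> \<eta>"
proof -
  have rat_near: "\<exists>q::rat. \<bar>x - of_rat q\<bar> < d" if d: "0 < d" for x d :: real
  proof -
    obtain r where "r \<in> \<rat>" "x - d < r" "r < x + d"
      using Rats_dense_in_real[of "x - d" "x + d"] d by auto
    then show ?thesis by (metis Rats_cases abs_diff_less_iff add.commute diff_less_eq less_diff_eq)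
  qed
  define \<delta> where "\<delta> = sqrt (\<eta> / 2)"
  have "0 < \<delta>" using assms by (simp add: \<delta>_def)
  then obtain a b where a: "\<bar>Re z - of_rat a\<bar> < \<delta>" and b: "\<bar>Im z - of_rat b\<bar> < \<delta>"
    using rat_near by meson
  have "(cmod (z - rat_complex (a, b)))^2 = (Re z - of_rat a)^2 + (Im z - of_rat b)^2"
    by (simp add: rat_complex_def cmod_power2)
  also have "\<dots> \<le> \<delta>^2 + \<delta>^2"
    using a b by (intro add_mono; metis abs_ge_zero less_imp_le power2_abs power_mono)
  also have "\<dots> = \<eta>" using assms by (simp add: \<delta>_def)
  finally show ?thesis by blast
qed

lemma summable_small_tail:
  fixes f :: "'i \<Rightarrow> real"
  assumes f: "f summable_on UNIV" and e: "0 < \<epsilon>"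
  shows "\<exists>F. finite F \<and> f summable_on (- F) \<and> infsum f (- F) \<le> \<epsilon>"
proof -
  obtain F where F: "finite F" "dist (sum f F) (infsum f UNIV) \<le> \<epsilon>"
    using infsum_finite_approximation[OF f e] by auto
  have tail: "f summable_on (- F)" by (rule summable_on_subset_banach[OF f]) auto
  have "infsum f UNIV = infsum f (F \<union> - F)" by simp
  also have "\<dots> = sum f F + infsum f (- F)"
    using infsum_Un_disjoint[of f F "- F"] F tail by auto
  finally show ?thesis using F tail by (auto simp: dist_real_def)
qed

lemma test_vec_dense:
  assumes y: "y \<in> Msub" and e: "0 < \<epsilon>"
  shows "\<exists>L. (\<lambda>m. (cmod (y m - test_vec L m))^2) summable_on UNIV \<and>
             infsum (\<lambda>m. (cmod (y m - test_vec L m))^2) UNIV < \<epsilon>"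
proof -
  define f where "f m = (cmod (y m))^2" for m
  have "f summable_on UNIV" using y by (simp add: Msub_def ell2_def f_def[abs_def])
  then obtain F where F: "finite F" "f summable_on (- F)" "infsum f (- F) \<le> \<epsilon> / 4"
    using summable_small_tail[of f "\<epsilon> / 4"] e by auto
  define \<eta> where "\<eta> = \<epsilon> / (4 * (card F + 1))"
  have eta: "0 < \<eta>" using e by (simp add: \<eta>_def)
  have "\<forall>m. \<exists>c. (cmod (y m - rat_complex c))^2 \<le> \<eta>" using rat_complex_approx[OF eta] by blast
  then obtain g where g: "\<And>m. (cmod (y m - rat_complex (g m)))^2 \<le> \<eta>" by metis
  define L where "L = map (\<lambda>m. (m, g m)) (sorted_list_of_set F)"
  have L: "test_vec L m = (if odd m \<and> m \<in> F then rat_complex (g m) else 0)" for m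
    using list_vec_of_distinct[of "sorted_list_of_set F" g m] F(1)
    by (simp add: test_vec_def L_def)
  define h where "h m = (cmod (y m - test_vec L m))^2" for m
  have h_out: "h m = f m" if "m \<notin> F" for m using that by (simp add: h_def f_def L)
  have h_in: "h m \<le> \<eta>" if "m \<in> F" for m
  proof (cases "odd m")
    case False
    then obtain n where "m = 2 * n" by (auto elim: evenE)
    then have "y m = 0" using y by (simp add: Msub_def)
    then show ?thesis using False eta by (simp add: h_def L)
  qed (use that g in \<open>simp add: h_def L\<close>)
  have h_tail: "h summable_on (- F)"
    using F(2) by (rule summable_on_cong[THEN iffD1, rotated]) (simp add: h_out)
  have "h summable_on (F \<union> - F)" by (rule summable_on_Un_disjoint) (use F h_tail in auto)
  then have h: "h summable_on UNIV" by simp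
  have "infsum h UNIV = infsum h (F \<union> - F)" by simp
  also have "\<dots> = sum h F + infsum f (- F)"
    using infsum_Un_disjoint[of h F "- F"] F h_tail infsum_cong[of "- F" h f] h_out by auto
  also have "sum h F \<le> card F * \<eta>" using sum_mono[of F h "\<lambda>_. \<eta>"] h_in by auto
  also have "card F * \<eta> \<le> \<epsilon> / 4" using e by (simp add: \<eta>_def field_simps)
  finally have "infsum h UNIV < \<epsilon>" using F(3) e by simp
  then show ?thesis using h unfolding h_def by blast
qed


definition fast_exponents :: "(nat \<Rightarrow> real) \<Rightarrow> real \<Rightarrow> (nat \<Rightarrow> nat) \<Rightarrow> bool" where
  "fast_exponents K r n \<longleftrightarrow> (\<forall>i. even (n i)) \<and> (\<forall>i. K i * r ^ n i \<le> (1/2) ^ i) \<and>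
     (\<forall>i j. i \<noteq> j \<longrightarrow> K i * r ^ nat_absdiff (n j) (n i) \<le> (1/2) ^ (i + j))"

lemma decay_exponent_exists:
  fixes T r \<epsilon> :: real
  assumes "0 < r" "r < 1" "0 < \<epsilon>"
  shows "\<exists>N. T * r ^ N \<le> \<epsilon>"
proof (cases "T \<le> 0")
  case True then show ?thesis using assms by (intro exI[of _ 0]) auto
next
  case False
  obtain N where "r ^ N < \<epsilon> / T" using real_arch_pow_inv[of "\<epsilon> / T" r] False assms by auto
  then have "T * r ^ N \<le> \<epsilon>" using False by (simp add: field_simps)
  then show ?thesis by blast
qed

(* Fast exponents exist: let n_i = 2 (g_0 + ... + g_i), where g_k makes
   (K_0 + ... + K_k) r^g_k at most 4^(-k). *)
lemma fast_exponents_exist: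
  assumes K: "\<And>i. 0 \<le> K i" and r: "0 < r" "r < 1"
  shows "\<exists>n. fast_exponents K r n"
proof -
  define T where "T k = (\<Sum>l\<le>k. K l)" for k
  have K_le_T: "K i \<le> T k" if "i \<le> k" for i k
    unfolding T_def by (rule member_le_sum) (use that K in auto)
  have "\<forall>k. \<exists>N. T k * r ^ N \<le> (1/4) ^ k" using decay_exponent_exists r by simp
  then obtain g where g: "\<And>k. T k * r ^ g k \<le> (1/4) ^ k" by metis
  define n where "n i = 2 * (\<Sum>k\<le>i. g k)" for i
  have g_le_n: "g i \<le> n i" for i using member_le_sum[of i "{..i}" g] by (simp add: n_def)
  have gap: "n i + g j \<le> n j" if "i < j" for i j
  proof -
    have "{..j} = {..i} \<union> {i<..j}" using that by auto
    then have "(\<Sum>k\<le>j. g k) = (\<Sum>k\<le>i. g k) + (\<Sum>k\<in>{i<..j}. g k)"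
      by (metis sum.union_disjoint finite_atMost finite_greaterThanAtMost
          atMost_iff greaterThanAtMost_iff disjoint_iff not_le)
    moreover have "g j \<le> (\<Sum>k\<in>{i<..j}. g k)" by (rule member_le_sum) (use that in auto)
    ultimately show ?thesis by (simp add: n_def)
  qed
  have decay: "K i * r ^ d \<le> (1/2) ^ m" if "i \<le> k" "g k \<le> d" "m \<le> 2 * k" for i k d m
  proof -
    have "K i * r ^ d \<le> T k * r ^ g k"
      using K_le_T[OF that(1)] power_decreasing[OF that(2), of r] r K[of i]
      by (intro mult_mono) auto
    also have "\<dots> \<le> (1/4) ^ k" by (rule g)
    also have "(1/4::real) ^ k = (1/2) ^ (2 * k)" by (simp add: power_mult power2_eq_square)
    also have "\<dots> \<le> (1/2) ^ m" by (rule power_decreasing) (use that in auto)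
    finally show ?thesis .
  qed
  have "K i * r ^ nat_absdiff (n j) (n i) \<le> (1/2) ^ (i + j)" if "i \<noteq> j" for i j
  proof (rule decay)
    show "g (max i j) \<le> nat_absdiff (n j) (n i)"
      using gap[of i j] gap[of j i] that by (cases "i < j") (auto simp: nat_absdiff_def max_def)
  qed auto
  moreover have "K i * r ^ n i \<le> (1/2) ^ i" for i by (rule decay[OF order_refl g_le_n]) simp
  ultimately have "fast_exponents K r n" by (simp add: fast_exponents_def n_def)
  then show ?thesis by blast
qed


(* piece y n s = lam^(-s) F^s (lam^n (F^n)^(-1) y), where (F^n)^(-1) shifts back by n
   and divides by the weights.  Its value at time s = n is y itself. *)
definition piece :: "(int \<Rightarrow> complex) \<Rightarrow> nat \<Rightarrow> nat \<Rightarrow> int \<Rightarrow> complex" where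
  "piece y n s m = complex_of_real (lam ^ n / lam ^ s * wprod (m - int s) s / wprod (m - int s) n)
                   * y (m - int s + int n)"

lemma piece_l1:
  assumes supp: "\<And>m. int S < \<bar>m\<bar> \<Longrightarrow> y m = 0" and bnd: "\<And>m. cmod (y m) \<le> A"
  shows "(\<lambda>m. cmod (piece y n s m)) summable_on UNIV \<and>
         infsum (\<lambda>m. cmod (piece y n s m)) UNIV \<le> (2 * S + 1) * 4 ^ S * A * rho ^ nat_absdiff s n"
proof -
  define T where "T = {int s - int n - int S .. int s - int n + int S}"
  define C where "C = 4 ^ S * rho ^ nat_absdiff s n * A"
  have A: "0 \<le> A" using bnd[of 0] norm_ge_zero by (rule order_trans[rotated])
  have out: "piece y n s m = 0" if "m \<notin> T" for m
    using that supp[of "m - int s + int n"] by (auto simp: T_def piece_def)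
  have pt: "cmod (piece y n s m) \<le> C" for m
  proof (cases "m \<in> T")
    case False then show ?thesis using out A by (simp add: C_def rho_def)
  next
    case True
    define q where "q = m - int s + int n"
    have q: "\<bar>q\<bar> \<le> int S" using True by (auto simp: T_def q_def)
    define c where "c = lam ^ n / lam ^ s * wprod (q - int n) s / wprod (q - int n) n"
    have c: "0 \<le> c" "c \<le> 4 ^ S * rho ^ nat_absdiff s n"
      using lam_pos wprod_pos[of "q - int n" s] wprod_pos[of "q - int n" n]
        scaled_transfer_bound[OF q, of n s]
      by (simp_all add: c_def)
    have "piece y n s m = complex_of_real c * y q"
      by (simp add: piece_def c_def q_def)
    then have "cmod (piece y n s m) = c * cmod (y q)" using c by (simp add: norm_mult)
    also have "\<dots> \<le> (4 ^ S * rho ^ nat_absdiff s n) * A"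
      using c A bnd[of q] by (intro mult_mono) auto
    finally show ?thesis by (simp add: C_def)
  qed
  have "finite T" "card T = 2 * S + 1" by (simp_all add: T_def)
  with finite_support_l1[of T "piece y n s" C] out pt show ?thesis by (simp add: C_def algebra_simps)
qed

lemma piece_shift:
  "complex_of_real (lam ^ s) * piece y n s m
     = complex_of_real (wprod (m - int s) s) * piece y n 0 (m - int s)"
  using lam_pos by (simp add: piece_def field_simps)

lemma piece_diag: "piece y n n m = y m"
  using lam_pos wprod_pos[of "m - int n" n] by (simp add: piece_def)

lemma piece_even:
  assumes "\<And>k. y (2 * k) = 0" "even n" "even s"
  shows "piece y n s (2 * k) = 0"
proof -
  obtain a b where "s = 2 * a" "n = 2 * b" using assms(2,3) by (auto elim!: evenE)
  then have "y (2 * k - int s + int n) = 0"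
    using assms(1)[of "k - int a + int b"] by (simp add: algebra_simps)
  then show ?thesis by (simp add: piece_def)
qed


(* The targets enumerate the test vectors, each occurring with arbitrarily large index. *)
definition target_list :: "nat \<Rightarrow> (int \<times> rat \<times> rat) list" where
  "target_list i = from_nat (fst (prod_decode i))"

definition target :: "nat \<Rightarrow> int \<Rightarrow> complex" where
  "target i = test_vec (target_list i)"

lemma target_recurs: "\<exists>j \<ge> r. target j = test_vec L"
proof (intro exI conjI)
  show "r \<le> prod_encode (to_nat L, r)" by (simp add: le_prod_encode_2)
qed (simp add: target_def target_list_def)

(* The constant in the l1 estimate of the pieces built from the i-th target. *)
definition target_const :: "nat \<Rightarrow> real" where
  "target_const i = (2 * real (test_radius (target_list i)) + 1) * 4 ^ test_radius (target_list i)
                    * test_mass (target_list i)"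

(* The exponent at which the i-th target is reached. *)
definition expo :: "nat \<Rightarrow> nat" where
  "expo = (SOME n. fast_exponents target_const rho n)"

lemma target_const_nonneg: "0 \<le> target_const i"
  by (simp add: target_const_def test_mass_nonneg)

lemma expo_fast: "fast_exponents target_const rho expo"
  unfolding expo_def
  by (rule someI_ex[OF fast_exponents_exist]) (auto simp: rho_def target_const_nonneg)

lemma target_piece_l1:
  "(\<lambda>m. cmod (piece (target i) (expo i) s m)) summable_on UNIV \<and>
   infsum (\<lambda>m. cmod (piece (target i) (expo i) s m)) UNIV
     \<le> target_const i * rho ^ nat_absdiff s (expo i)"
  unfolding target_const_def target_def
  by (rule piece_l1) (auto intro: test_vec_outside test_vec_norm_le)

(* orbit_term s = sum_i piece (target i) (expo i) s; orbit_term 0 is the disk vector x and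
   orbit_term s = lam^(-s) F^s x. *)
definition orbit_term :: "nat \<Rightarrow> int \<Rightarrow> complex" where
  "orbit_term s m = infsum (\<lambda>i. piece (target i) (expo i) s m) UNIV"

definition disk_vector :: "int \<Rightarrow> complex" where
  "disk_vector = orbit_term 0"

(* Each orbit term is an l1 vector: at time s the i-th piece has l1 norm at most
   2^(-i) rho^(-s), by the fast choice of the exponents. *)
lemma orbit_term_l1: "(\<lambda>m. cmod (orbit_term s m)) summable_on UNIV"
proof -
  define B where "B i = (1/2) ^ i * (1 / rho ^ s)" for i
  have "infsum (\<lambda>m. cmod (piece (target i) (expo i) s m)) UNIV \<le> B i" for i
  proof -
    have "target_const i * (rho ^ nat_absdiff s (expo i) * rho ^ s) \<le> target_const i * rho ^ expo i"
      using rho_pos by (intro mult_left_mono[OF power_absdiff_le target_const_nonneg])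
        (simp_all add: rho_def)
    also have "\<dots> \<le> (1/2) ^ i" using expo_fast by (simp add: fast_exponents_def)
    finally have "target_const i * rho ^ nat_absdiff s (expo i) \<le> B i"
      by (simp add: B_def pos_le_divide_eq[OF zero_less_power[OF rho_pos]])
    then show ?thesis using target_piece_l1[of i s] by simp
  qed
  moreover have "B summable_on UNIV"
    unfolding B_def using geometric_has_sum[of "1/2"]
    by (intro summable_on_cmult_left) (auto dest: has_sum_imp_summable)
  ultimately show ?thesis
    using l1_sum_of_series[of "\<lambda>i. piece (target i) (expo i) s" B] target_piece_l1
    by (simp add: orbit_term_def[abs_def])
qed

lemma orbit_term_ell2: "orbit_term s \<in> ell2"
  using l1_imp_l2[OF orbit_term_l1] by (simp add: ell2_def)

lemma disk_vector_ell2: "disk_vector \<in> ell2"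
  by (simp add: disk_vector_def orbit_term_ell2)

(* Since all exponents are even, the orbit terms at even times lie in M. *)
lemma orbit_term_even: "even s \<Longrightarrow> orbit_term s (2 * k) = 0"
  using expo_fast by (simp add: orbit_term_def target_def piece_even test_vec_even
      fast_exponents_def)

lemma Fshift_power_disk_vector:
  "(Fshift ^^ s) disk_vector m = complex_of_real (lam ^ s) * orbit_term s m"
proof -
  have "(Fshift ^^ s) disk_vector m
        = complex_of_real (wprod (m - int s) s) * disk_vector (m - int s)"
    by (rule Fshift_power)
  also have "\<dots> = infsum (\<lambda>i. complex_of_real (wprod (m - int s) s)
                                  * piece (target i) (expo i) 0 (m - int s)) UNIV"
    by (simp add: disk_vector_def orbit_term_def infsum_cmult_right')
  also have "\<dots> = infsum (\<lambda>i. complex_of_real (lam ^ s) * piece (target i) (expo i) s m) UNIV"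
    by (simp only: piece_shift)
  also have "\<dots> = complex_of_real (lam ^ s) * orbit_term s m"
    by (simp add: orbit_term_def infsum_cmult_right')
  finally show ?thesis .
qed

lemma orbit_term_error:
  "(\<lambda>m. (cmod (orbit_term (expo j) m - target j m))^2) summable_on UNIV \<and>
   infsum (\<lambda>m. (cmod (orbit_term (expo j) m - target j m))^2) UNIV \<le> 4 * (1/4) ^ j"
proof -
  define E where "E i m = (if i = j then 0 else piece (target i) (expo i) (expo j) m)" for i m
  have E_l1: "(\<lambda>m. cmod (E i m)) summable_on UNIV" for i
    using target_piece_l1[of i "expo j"] by (cases "i = j") (simp_all add: E_def)
  have E_bound: "infsum (\<lambda>m. cmod (E i m)) UNIV \<le> (1/2) ^ (i + j)" for i
  proof (cases "i = j")
    case False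
    then have "target_const i * rho ^ nat_absdiff (expo j) (expo i) \<le> (1/2) ^ (i + j)"
      using expo_fast by (simp add: fast_exponents_def)
    then show ?thesis using False target_piece_l1[of i "expo j"] by (simp add: E_def)
  qed (simp add: E_def)
  have R: "(\<forall>m. (\<lambda>i. E i m) summable_on UNIV) \<and>
         (\<lambda>m. cmod (infsum (\<lambda>i. E i m) UNIV)) summable_on UNIV \<and>
         infsum (\<lambda>m. cmod (infsum (\<lambda>i. E i m) UNIV)) UNIV \<le> (1/2) ^ j * 2"
    using l1_sum_of_series[OF E_l1 E_bound has_sum_imp_summable[OF half_power_has_sum]]
    by (simp add: infsumI[OF half_power_has_sum])
  have err: "orbit_term (expo j) m - target j m = infsum (\<lambda>i. E i m) UNIV" for m
  proof -
    have "orbit_term (expo j) m = infsum (\<lambda>i. E i m + (if i = j then target j m else 0)) UNIV"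
      unfolding orbit_term_def by (rule infsum_cong) (simp add: E_def piece_diag)
    also have "\<dots> = infsum (\<lambda>i. E i m) UNIV + infsum (\<lambda>i. if i = j then target j m else 0) UNIV"
      using R by (subst infsum_add) (auto intro: finite_nonzero_values_imp_summable_on)
    also have "infsum (\<lambda>i. if i = j then target j m else 0) UNIV = target j m"
      by (subst infsum_cong_neutral[where T="{j}" and g="\<lambda>i. target j m"]) auto
    finally show ?thesis by simp
  qed
  have l1: "(\<lambda>m. cmod (orbit_term (expo j) m - target j m)) summable_on UNIV"
    "infsum (\<lambda>m. cmod (orbit_term (expo j) m - target j m)) UNIV \<le> (1/2) ^ j * 2"
    using R by (simp_all add: err)
  have "(infsum (\<lambda>m. cmod (orbit_term (expo j) m - target j m)) UNIV)^2 \<le> ((1/2) ^ j * 2)^2"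
    using l1(2) by (rule power_mono) (simp add: infsum_nonneg)
  also have "((1/2::real) ^ j * 2)^2 = 4 * (1/4) ^ j"
    by (simp add: power_mult_distrib power2_eq_square flip: power_mult_distrib)
  finally show ?thesis using l1_imp_l2[OF l1(1)] by simp
qed

lemma orbit_term_in_disk_orbit:
  "orbit_term (expo j) \<in> {(\<lambda>k. \<alpha> * (Fshift ^^ n) disk_vector k) | \<alpha> n. cmod \<alpha> \<le> 1} \<inter> Msub"
proof
  let ?\<alpha> = "complex_of_real (1 / lam ^ expo j)"
  have "1 \<le> lam ^ expo j" by (rule one_le_power) (simp add: lam_def)
  then have "\<bar>1 / lam ^ expo j\<bar> \<le> 1" by simp
  then have "cmod ?\<alpha> \<le> 1" by (simp only: norm_of_real)
  moreover have "orbit_term (expo j) = (\<lambda>k. ?\<alpha> * (Fshift ^^ expo j) disk_vector k)"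
    using lam_pos by (simp add: Fshift_power_disk_vector flip: of_real_mult)
  ultimately show "orbit_term (expo j) \<in> {(\<lambda>k. \<alpha> * (Fshift ^^ n) disk_vector k) | \<alpha> n. cmod \<alpha> \<le> 1}"
    by blast
  show "orbit_term (expo j) \<in> Msub"
    using orbit_term_ell2 orbit_term_even expo_fast by (simp add: Msub_def fast_exponents_def)
qed

(* Given y in M and e > 0, approximate y by a test vector L and pick a target index
   j >= r with target j = L; the scaled iterate at time expo j is then within e of y. *)
theorem Fshift_M_diskcyclic: "M_diskcyclic Fshift Msub"
  unfolding M_diskcyclic_def ell2_dense_in_def
proof (intro bexI[OF _ disk_vector_ell2] conjI ballI allI impI)
  fix y and e :: real
  assume y: "y \<in> Msub" and e: "0 < e"
  obtain L where L: "(\<lambda>m. (cmod (y m - test_vec L m))^2) summable_on UNIV"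
    "infsum (\<lambda>m. (cmod (y m - test_vec L m))^2) UNIV < e^2 / 4"
    using test_vec_dense[OF y, of "e^2 / 4"] e by auto
  obtain r where r: "(1/4::real) ^ r < e^2 / 32"
    using real_arch_pow_inv[of "e^2 / 32" "1/4"] e by auto
  obtain j where j: "r \<le> j" "target j = test_vec L" using target_recurs by blast
  have "(1/4::real) ^ j \<le> (1/4) ^ r" using j(1) by (rule power_decreasing) auto
  then have "2 * (4 * (1/4) ^ j) + 2 * (e^2 / 4) < e^2" using r zero_le_power2[of e] by linarith
  then have "ell2_norm (\<lambda>m. orbit_term (expo j) m - y m) < e"
    using orbit_term_error[of j] L e
    by (intro ell2_norm_diff_lt[where c = "test_vec L"]) (auto simp: j(2))
  then show "\<exists>z\<in>{(\<lambda>k. \<alpha> * (Fshift ^^ n) disk_vector k) | \<alpha> n. cmod \<alpha> \<le> 1} \<inter> Msub.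
               ell2_norm (\<lambda>m. z m - y m) < e"
    using orbit_term_in_disk_orbit by blast
qed blast


(* F is expansive on l2: all weights are at least 1. *)
lemma Fshift_power_expansive:
  assumes x: "x \<in> ell2" and Fx: "(Fshift ^^ n) x \<in> ell2"
  shows "infsum (\<lambda>m. (cmod (x m))^2) UNIV \<le> infsum (\<lambda>m. (cmod ((Fshift ^^ n) x m))^2) UNIV"
proof -
  have Fx_sq: "(\<lambda>m. (cmod ((Fshift ^^ n) x m))^2) summable_on UNIV"
    using Fx by (simp add: ell2_def)
  have shift: "(\<lambda>m. (cmod (x (m - int n)))^2) summable_on UNIV \<and>
         infsum (\<lambda>m. (cmod (x m))^2) UNIV = infsum (\<lambda>m. (cmod (x (m - int n)))^2) UNIV"
    using x summable_on_reindex_bij_witness[where j="\<lambda>m. m + int n" and i="\<lambda>m. m - int n"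
        and S=UNIV and T=UNIV and g="\<lambda>m. (cmod (x m))^2" and h="\<lambda>m. (cmod (x (m - int n)))^2"]
      infsum_reindex_bij_witness[where j="\<lambda>m. m + int n" and i="\<lambda>m. m - int n"
        and S=UNIV and T=UNIV and g="\<lambda>m. (cmod (x m))^2" and h="\<lambda>m. (cmod (x (m - int n)))^2"]
    by (auto simp: ell2_def)
  have pt: "(cmod (x (m - int n)))^2 \<le> (cmod ((Fshift ^^ n) x m))^2" for m
  proof -
    have "cmod (x (m - int n)) \<le> wprod (m - int n) n * cmod (x (m - int n))"
      using wprod_ge_1[of "m - int n" n] by (simp add: mult_le_cancel_right1)
    also have "\<dots> = cmod ((Fshift ^^ n) x m)"
      using wprod_pos[of "m - int n" n] by (simp add: Fshift_power norm_mult)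
    finally show ?thesis by (rule power_mono) simp
  qed
  show ?thesis using shift infsum_mono[OF _ Fx_sq pt] by simp
qed

lemma orbit_near_zero_imp_zero:
  assumes x: "x \<in> ell2"
    and near: "\<And>e. 0 < e \<Longrightarrow> \<exists>n. (Fshift ^^ n) x \<in> Msub \<and> ell2_norm (\<lambda>k. (Fshift ^^ n) x k - 0) < e"
  shows "x m0 = 0"
proof (rule ccontr)
  assume "x m0 \<noteq> 0"
  define N where "N = infsum (\<lambda>m. (cmod (x m))^2) UNIV"
  have "(cmod (x m0))^2 \<le> N"
    using x finite_sum_le_infsum[of "\<lambda>m. (cmod (x m))^2" UNIV "{m0}"] by (simp add: ell2_def N_def)
  with \<open>x m0 \<noteq> 0\<close> have "0 < N" by (smt (verit) zero_less_power2 norm_eq_zero)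
  then obtain n where n: "(Fshift ^^ n) x \<in> Msub" "ell2_norm (\<lambda>k. (Fshift ^^ n) x k - 0) < sqrt N"
    using near[of "sqrt N"] by auto
  have "N \<le> infsum (\<lambda>m. (cmod ((Fshift ^^ n) x m))^2) UNIV"
    unfolding N_def by (rule Fshift_power_expansive[OF x]) (use n in \<open>simp add: Msub_def\<close>)
  then show False using n(2) by (simp add: ell2_norm_def)
qed

(* A dense orbit would have to approach 0, forcing x = 0; but the zero orbit does not
   approach the unit vector e_1, which lies in M. *)
theorem Fshift_not_M_hypercyclic: "\<not> M_hypercyclic Fshift Msub"
proof
  assume "M_hypercyclic Fshift Msub"
  then obtain x where x: "x \<in> ell2"
    and orbit_dense: "ell2_dense_in ({(Fshift ^^ n) x | n. True} \<inter> Msub) Msub"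
    unfolding M_hypercyclic_def by blast
  have dense: "\<exists>n. (Fshift ^^ n) x \<in> Msub \<and> ell2_norm (\<lambda>k. (Fshift ^^ n) x k - y k) < e"
    if "y \<in> Msub" "0 < e" for y e
    using orbit_dense that unfolding ell2_dense_in_def by blast
  have zero: "(\<lambda>k. 0::complex) \<in> Msub" by (simp add: Msub_def ell2_def)
  have "x m = 0" for m by (rule orbit_near_zero_imp_zero[OF x dense[OF zero]])
  then have orbit_zero: "(Fshift ^^ n) x k = 0" for n k by (simp add: Fshift_power)
  (* the unit vector e_1 lies in M at distance 1 from the zero orbit *)
  define e1 :: "int \<Rightarrow> complex" where "e1 m = (if m = 1 then 1 else 0)" for m
  have "(\<lambda>m. (cmod (e1 m))^2) summable_on UNIV"
    by (rule finite_nonzero_values_imp_summable_on) (simp add: e1_def)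
  moreover have "e1 (2 * k) = 0" for k by (simp add: e1_def) presburger
  ultimately have "e1 \<in> Msub" by (simp add: Msub_def ell2_def)
  then obtain n where "ell2_norm (\<lambda>k. (Fshift ^^ n) x k - e1 k) < 1" using dense[of e1 1] by auto
  moreover have "infsum (\<lambda>k. (cmod (0 - e1 k))^2) UNIV = 1"
    by (subst infsum_cong_neutral[where T="{1}" and g="\<lambda>k. 1"]) (auto simp: e1_def)
  ultimately show False by (simp add: ell2_norm_def orbit_zero)
qed

theorem mainTheorem8:
  shows "M_diskcyclic Fshift Msub \<and> \<not> M_hypercyclic Fshift Msub"
  using Fshift_M_diskcyclic Fshift_not_M_hypercyclic by blast

end
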